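(* Let $G$ be a non-singular graph with $n$ vertices and adjacency matrix $A=(a_{ij})$. If $f:\mathcal{A}_{RW}(G)\to\mathcal{A}(G)$ is an algebra homomorphism, then either $f$ is the null map, or $f$ is an isomorphism given by $f(e_i)=\alpha_i e_{\pi(i)}$ for all $i\in V$, where $\alpha_i\neq0$ are scalars and $\pi$ is an element of the symmetric group $S_n$.
   Context: Graphs are simple (no loops or multiple edges) and connected; here $V=\{1,\dots,n\}$ is finite. The adjacency matrix is $A=(a_{ij})$ with $a_{ij}=1$ if $i,j$ are neighbors and $0$ otherwise; $G$ is non-singular if $\det A\ne0$. $\deg(i)$ is the number of neighbors of $i$. An evolution algebra over $\mathbb{R}$ is an algebra with a basis $\{e_i\}$ (natural basis) such that $e_i\cdot e_j=0$ for $i\ne j$ and $e_i\cdot e_i=\sum_k c_{ik}e_k$. $\mathcal{A}(G)$ has natural basis $\{e_i:i\in V\}$ with $e_i\cdot e_i=\sum_{k\in V}a_{ik}e_k$; $\mathcal{A}_{RW}(G)$ has natural basis $\{e_i:i\in V\}$ with $e_i\cdot e_i=\sum_{k\in V}\frac{a_{ik}}{\deg(i)}e_k$; in both, $e_i\cdot e_j=0$ for $i\ne j$. A homomorphism is a linear map $f$ with $f(u\cdot v)=f(u)\cdot f(v)$. *)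

theory Defs
  imports "HOL-Analysis.Analysis"
begin

text \<open>Vertices are the elements of a finite type 'n (so n = CARD('n)).
  A graph is given by its adjacency matrix.\<close>

definition simple_adjacency :: "real^'n^'n \<Rightarrow> bool" where
  "simple_adjacency A \<longleftrightarrow>
     (\<forall>i j. A$i$j = 0 \<or> A$i$j = 1) \<and> (\<forall>i j. A$i$j = A$j$i) \<and> (\<forall>i. A$i$i = 0)"

definition adjacent :: "real^'n^'n \<Rightarrow> 'n \<Rightarrow> 'n \<Rightarrow> bool" where
  "adjacent A i j \<longleftrightarrow> A$i$j = 1"

definition graph_connected :: "real^'n^'n \<Rightarrow> bool" where
  "graph_connected A \<longleftrightarrow> (\<forall>i j. (adjacent A)\<^sup>*\<^sup>* i j)"

definition deg :: "real^'n^'n \<Rightarrow> 'n \<Rightarrow> nat" where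
  "deg A i = card {k. adjacent A i k}"

text \<open>Evolution algebra with structure matrix C on the natural basis:
  elements are coordinate vectors, e_i e_i = sum_k C_ik e_k, e_i e_j = 0 for i ~= j.\<close>

definition evo_mult :: "real^'n^'n \<Rightarrow> real^'n \<Rightarrow> real^'n \<Rightarrow> real^'n" where
  "evo_mult C u v = (\<chi> k. \<Sum>i\<in>UNIV. u$i * v$i * C$i$k)"

definition nat_basis :: "'n \<Rightarrow> real^'n" where
  "nat_basis i = axis i 1"

text \<open>Structure matrix of A(G) is A; that of A_RW(G) is a_ik / deg i.\<close>
definition rw_matrix :: "real^'n^'n \<Rightarrow> real^'n^'n" where
  "rw_matrix A = (\<chi> i k. A$i$k / real (deg A i))"

definition evo_hom :: "real^'n^'n \<Rightarrow> real^'n^'n \<Rightarrow> (real^'n \<Rightarrow> real^'n) \<Rightarrow> bool" where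
  "evo_hom C D f \<longleftrightarrow> linear f \<and> (\<forall>u v. f (evo_mult C u v) = evo_mult D (f u) (f v))"

end

theory Submission
  imports Defs
begin

text \<open>Write \<open>u\<^sub>i = f(e\<^sub>i)\<close>. In an evolution algebra the product \<open>u v\<close> is the row vector
  \<open>(u\<^sub>k v\<^sub>k)\<^sub>k\<close> times the structure matrix; as \<open>A\<close> is non-singular, \<open>f(e\<^sub>i e\<^sub>j) = 0\<close> forces
  the images \<open>u\<^sub>i, u\<^sub>j\<close> of distinct basis vectors to have disjoint supports. Applying \<open>f\<close> to
  \<open>e\<^sub>i\<^sup>2 = \<Sum>\<^sub>k a\<^sub>i\<^sub>k/deg(i) e\<^sub>k\<close> shows that if \<open>u\<^sub>i = 0\<close> then \<open>\<Sum>\<^sub>k a\<^sub>i\<^sub>k/deg(i) u\<^sub>k = 0\<close>, and by disjointness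
  of supports every neighbour \<open>k\<close> of \<open>i\<close> has \<open>u\<^sub>k = 0\<close>; by connectedness \<open>f = 0\<close>. Otherwise
  all \<open>u\<^sub>i\<close> are non-zero with pairwise disjoint supports in an \<open>n\<close>-dimensional space, so each
  is supported on a single coordinate \<open>\<pi>(i)\<close> and \<open>\<pi>\<close> is a permutation.\<close>

lemma evo_mult_eq_vector_matrix_mult: "evo_mult C u v = (\<chi> k. u$k * v$k) v* C"
  unfolding evo_mult_def vector_matrix_mult_def by (simp add: mult.commute)

lemma evo_mult_eq_0_iff:
  fixes C :: "real^'n^'n"
  assumes "det C \<noteq> 0"
  shows "evo_mult C u v = 0 \<longleftrightarrow> (\<forall>k. u$k * v$k = 0)"
proof -
  have "invertible (transpose C)"
    using assms by (simp add: det_transpose invertible_det_nz)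
  then have "\<forall>x. transpose C *v x = 0 \<longrightarrow> x = 0"
    unfolding invertible_def using matrix_left_invertible_ker by blast
  then have "evo_mult C u v = 0 \<longleftrightarrow> (\<chi> k. u$k * v$k) = 0"
    by (auto simp: evo_mult_eq_vector_matrix_mult)
  then show ?thesis by (simp add: vec_eq_iff)
qed

lemma evo_mult_nat_basis:
  "evo_mult C (nat_basis i) (nat_basis j) = (if i = j then row i C else 0)"
  unfolding evo_mult_def nat_basis_def row_def
  by (auto simp: vec_eq_iff axis_def if_distrib[of "\<lambda>x. x * _"] cong: if_cong)

lemma row_eq_sum_nat_basis: "row i C = (\<Sum>k\<in>UNIV. C$i$k *\<^sub>R nat_basis k)"
  using basis_expansion[of "row i C"] by (simp add: row_def nat_basis_def scalar_mult_eq_scaleR)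

lemma linear_eq_sum_nat_basis:
  assumes "linear f"
  shows "f x = (\<Sum>j\<in>UNIV. x$j *\<^sub>R f (nat_basis j))"
proof -
  have "f x = f (\<Sum>j\<in>UNIV. x$j *\<^sub>R nat_basis j)"
    using basis_expansion[of x] by (simp add: nat_basis_def scalar_mult_eq_scaleR)
  also have "\<dots> = (\<Sum>j\<in>UNIV. x$j *\<^sub>R f (nat_basis j))"
    using assms by (simp add: linear_sum linear_scale)
  finally show ?thesis .
qed

lemma sum_scaleR_component_single:
  fixes u :: "'a::finite \<Rightarrow> real^'n"
  assumes "\<And>j. j \<noteq> k \<Longrightarrow> u j $ m = 0"
  shows "(\<Sum>j\<in>UNIV. c j *\<^sub>R u j) $ m = c k * u k $ m"
proof -
  have "(\<Sum>j\<in>UNIV. c j *\<^sub>R u j) $ m = (\<Sum>j\<in>UNIV. c j * u j $ m)"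
    by (simp add: sum_component)
  also have "\<dots> = c k * u k $ m"
    using assms by (subst sum.remove[of _ k]) auto
  finally show ?thesis .
qed

lemma evo_hom_disjoint_supports:
  fixes D :: "real^'n^'n"
  assumes "evo_hom C D f" and "det D \<noteq> 0" and "i \<noteq> j"
  shows "f (nat_basis i) $ k * f (nat_basis j) $ k = 0"
proof -
  have "evo_mult D (f (nat_basis i)) (f (nat_basis j)) = f (evo_mult C (nat_basis i) (nat_basis j))"
    using assms(1) by (simp add: evo_hom_def)
  also have "\<dots> = f 0"
    using assms(3) by (simp add: evo_mult_nat_basis)
  also have "\<dots> = 0"
    using assms(1) by (simp add: evo_hom_def linear_0)
  finally show ?thesis
    using evo_mult_eq_0_iff[OF assms(2)] by blast
qed

lemma evo_hom_square_nat_basis: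
  assumes "evo_hom C D f"
  shows "(\<Sum>k\<in>UNIV. C$i$k *\<^sub>R f (nat_basis k)) = evo_mult D (f (nat_basis i)) (f (nat_basis i))"
proof -
  have "(\<Sum>k\<in>UNIV. C$i$k *\<^sub>R f (nat_basis k)) = f (row i C)"
    using assms by (simp add: evo_hom_def row_eq_sum_nat_basis linear_sum linear_scale)
  also have "\<dots> = evo_mult D (f (nat_basis i)) (f (nat_basis i))"
    using assms by (metis evo_hom_def evo_mult_nat_basis)
  finally show ?thesis .
qed

lemma evo_hom_nat_basis_eq_0_step:
  fixes D :: "real^'n^'n"
  assumes hom: "evo_hom C D f" and "det D \<noteq> 0"
    and "f (nat_basis i) = 0" and "C$i$k \<noteq> 0"
  shows "f (nat_basis k) = 0"
proof (rule ccontr)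
  assume "f (nat_basis k) \<noteq> 0"
  then obtain m where m: "f (nat_basis k) $ m \<noteq> 0" by (auto simp: vec_eq_iff)
  have others: "f (nat_basis j) $ m = 0" if "j \<noteq> k" for j
    using evo_hom_disjoint_supports[OF hom \<open>det D \<noteq> 0\<close> that, of m] m by simp
  have "(\<Sum>j\<in>UNIV. C$i$j *\<^sub>R f (nat_basis j)) = 0"
    using evo_hom_square_nat_basis[OF hom, of i] \<open>f (nat_basis i) = 0\<close>
    by (simp add: evo_mult_def zero_vec_def)
  then have "C$i$k * f (nat_basis k) $ m = 0"
    using sum_scaleR_component_single[of k "\<lambda>j. f (nat_basis j)" m "\<lambda>j. C$i$j", OF others]
    by simp
  then show False using m \<open>C$i$k \<noteq> 0\<close> by simp
qed

lemma disjoint_supports_nonzero_eq_scaled_perm: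
  fixes u :: "'n::finite \<Rightarrow> real^'n"
  assumes disjoint: "\<And>i j k. i \<noteq> j \<Longrightarrow> u i $ k * u j $ k = 0"
    and nonzero: "\<And>i. u i \<noteq> 0"
  obtains \<pi> where "\<pi> permutes UNIV" and "\<And>i. u i $ \<pi> i \<noteq> 0"
    and "\<And>i. u i = u i $ \<pi> i *\<^sub>R nat_basis (\<pi> i)"
proof -
  have "\<forall>i. \<exists>k. u i $ k \<noteq> 0"
    using nonzero by (auto simp: vec_eq_iff)
  then obtain \<pi> where pi: "\<And>i. u i $ \<pi> i \<noteq> 0" by metis
  have "inj \<pi>"
    by (rule injI) (use disjoint pi in force)
  then have "surj \<pi>" using finite_UNIV_inj_surj[OF finite] by blast
  have "u i $ k = 0" if "k \<noteq> \<pi> i" for i k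
  proof -
    obtain j where "k = \<pi> j" using \<open>surj \<pi>\<close> by (metis surjD)
    then show ?thesis using disjoint[of i j k] pi[of j] that by auto
  qed
  then have "u i = u i $ \<pi> i *\<^sub>R nat_basis (\<pi> i)" for i
    by (auto simp: vec_eq_iff nat_basis_def axis_def)
  moreover have "\<pi> permutes UNIV"
    using \<open>inj \<pi>\<close> \<open>surj \<pi>\<close> by (intro bij_imp_permutes) (auto simp: bij_def)
  ultimately show ?thesis using that pi by blast
qed

lemma linear_scaled_perm_bij:
  fixes f :: "real^'n \<Rightarrow> real^'n"
  assumes "linear f" and "\<pi> permutes UNIV" and "\<And>i. \<alpha> i \<noteq> 0"
    and f_basis: "\<And>i. f (nat_basis i) = \<alpha> i *\<^sub>R nat_basis (\<pi> i)"
  shows "bij f"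
proof -
  have "x = 0" if "f x = 0" for x
  proof -
    have "x $ i * \<alpha> i = 0" for i
    proof -
      have "x $ i * \<alpha> i = (\<Sum>j\<in>UNIV. x$j *\<^sub>R (\<alpha> j *\<^sub>R nat_basis (\<pi> j))) $ \<pi> i"
        using permutes_inj[OF assms(2)]
        by (subst sum_scaleR_component_single[of i]) (auto simp: nat_basis_def axis_def inj_eq)
      also have "\<dots> = 0"
        using that linear_eq_sum_nat_basis[OF assms(1), of x] by (simp add: f_basis)
      finally show ?thesis .
    qed
    then show ?thesis using assms(3) by (simp add: vec_eq_iff)
  qed
  then have "inj f" using linear_injective_0[OF assms(1)] by blast
  then show ?thesis using linear_inj_imp_surj[OF assms(1)] by (simp add: bij_def)
qed

lemma rw_matrix_nonzero_if_adjacent: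
  assumes "adjacent A i k"
  shows "rw_matrix A $ i $ k \<noteq> 0"
proof -
  have "deg A i > 0"
    using assms unfolding deg_def by (auto simp: card_gt_0_iff)
  then show ?thesis using assms by (simp add: rw_matrix_def adjacent_def)
qed

theorem proposition2p15:
  fixes A :: "real^'n^'n" and f :: "real^'n \<Rightarrow> real^'n"
  assumes "simple_adjacency A" and "graph_connected A" and "det A \<noteq> 0"
    and "evo_hom (rw_matrix A) A f"
  shows "(\<forall>u. f u = 0) \<or>
         (bij f \<and> (\<exists>\<alpha> \<pi>. \<pi> permutes (UNIV :: 'n set) \<and> (\<forall>i. \<alpha> i \<noteq> (0::real)) \<and>
                    (\<forall>i. f (nat_basis i) = \<alpha> i *\<^sub>R nat_basis (\<pi> i))))"
proof (cases "\<exists>i. f (nat_basis i) = 0")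
  case True
  then obtain i0 where "f (nat_basis i0) = 0" by blast
  have "f (nat_basis j) = 0" for j
  proof -
    have "(adjacent A)\<^sup>*\<^sup>* i0 j"
      using assms(2) unfolding graph_connected_def by blast
    then show ?thesis
    proof induction
      case (step y z)
      then show ?case
        by (metis evo_hom_nat_basis_eq_0_step[OF assms(4,3)] rw_matrix_nonzero_if_adjacent)
    qed fact
  qed
  moreover have "linear f"
    using assms(4) by (simp add: evo_hom_def)
  ultimately have "f u = 0" for u
    using linear_eq_sum_nat_basis[of f u] by simp
  then show ?thesis by simp
next
  case False
  obtain \<pi> where perm: "\<pi> permutes UNIV" and nonzero: "\<And>i. f (nat_basis i) $ \<pi> i \<noteq> 0"
    and scaled: "\<And>i. f (nat_basis i) = f (nat_basis i) $ \<pi> i *\<^sub>R nat_basis (\<pi> i)"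
    by (rule disjoint_supports_nonzero_eq_scaled_perm[of "\<lambda>i. f (nat_basis i)"])
       (use evo_hom_disjoint_supports[OF assms(4,3)] False in auto)
  have "bij f"
    using linear_scaled_perm_bij[OF _ perm nonzero scaled] assms(4) by (simp add: evo_hom_def)
  moreover have "\<exists>\<alpha> \<pi>. \<pi> permutes UNIV \<and> (\<forall>i. \<alpha> i \<noteq> 0) \<and>
                  (\<forall>i. f (nat_basis i) = \<alpha> i *\<^sub>R nat_basis (\<pi> i))"
    by (rule exI[of _ "\<lambda>i. f (nat_basis i) $ \<pi> i"], rule exI[of _ \<pi>])
       (use perm nonzero scaled in blast)
  ultimately show ?thesis by blast
qed

end
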